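(* Let $V$ be a poset, $m$ a maximal node of positive height, and let $U$ be a splitting of $V$ at $m$ with splitting map $\varphi$ and associated set $\mathcal M=\varphi^{-1}(m)$. Then $d_{L_U(n)}(n)=d_{L_V(\varphi(n))}(\varphi(n))$ for every node $n\in U\setminus\mathcal M$ of positive height.
   Context: For a poset $W$: $L_W(u)=\{v\le u\}$, $G(u)=\{v\ge u\}$; height of $u$ is the supremum of lengths of chains in $L(u)$; $H_1$ = height-one nodes; $\mathcal H_W$ = minimal nodes together with height-one nodes dominating at least two minimal nodes. For a poset $W$ with single maximal node $n$ and dimension $\ge1$: $\mathcal H_W^*=\mathcal H_W\setminus\{n\}$; $\Lambda_W$ = $(H_1\cap\mathcal H_W^* )$ together with all $v\in\mathcal H_W^*$ with $G(v)\cap H_1\cap\mathcal H_W^*=\emptyset$; $d_W(n)=|\Lambda_W|$. Splitting: $U$ is a splitting of $V$ at $m$ via $\varphi:U\to V$ if $\varphi$ is surjective order-preserving, there is a finite nonempty $\mathcal M\subseteq\max U$ of positive-height nodes with $\varphi^{-1}(m)=\mathcal M$, $|\varphi^{-1}(v)|=1$ for $v\ne m$, and whenever $\varphi(x')=x\le y$ there is $y'\ge x'$ with $\varphi(y')=y$. *)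

theory Defs
  imports Main "HOL-Library.Extended_Nat"
begin

definition poset :: "'a set \<Rightarrow> ('a \<Rightarrow> 'a \<Rightarrow> bool) \<Rightarrow> bool" where
  "poset W le \<longleftrightarrow>
     (\<forall>x\<in>W. le x x) \<and>
     (\<forall>x\<in>W. \<forall>y\<in>W. le x y \<and> le y x \<longrightarrow> x = y) \<and>
     (\<forall>x\<in>W. \<forall>y\<in>W. \<forall>z\<in>W. le x y \<and> le y z \<longrightarrow> le x z)"

definition downset :: "'a set \<Rightarrow> ('a \<Rightarrow> 'a \<Rightarrow> bool) \<Rightarrow> 'a \<Rightarrow> 'a set" where
  "downset W le u = {v\<in>W. le v u}"

definition upset :: "'a set \<Rightarrow> ('a \<Rightarrow> 'a \<Rightarrow> bool) \<Rightarrow> 'a \<Rightarrow> 'a set" where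
  "upset W le u = {v\<in>W. le u v}"

definition is_chain :: "('a \<Rightarrow> 'a \<Rightarrow> bool) \<Rightarrow> 'a set \<Rightarrow> bool" where
  "is_chain le C \<longleftrightarrow> (\<forall>x\<in>C. \<forall>y\<in>C. le x y \<or> le y x)"

text \<open>Height: supremum of lengths (number of elements minus one) of chains in the downset.
  Infinite chains contain arbitrarily long finite ones, so finite chains suffice.\<close>
definition height :: "'a set \<Rightarrow> ('a \<Rightarrow> 'a \<Rightarrow> bool) \<Rightarrow> 'a \<Rightarrow> enat" where
  "height W le u = Sup {enat (card C - 1) | C. finite C \<and> C \<noteq> {} \<and> C \<subseteq> downset W le u \<and> is_chain le C}"

definition minimal_nodes :: "'a set \<Rightarrow> ('a \<Rightarrow> 'a \<Rightarrow> bool) \<Rightarrow> 'a set" where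
  "minimal_nodes W le = {u\<in>W. \<forall>v\<in>W. le v u \<longrightarrow> v = u}"

definition maximal_nodes :: "'a set \<Rightarrow> ('a \<Rightarrow> 'a \<Rightarrow> bool) \<Rightarrow> 'a set" where
  "maximal_nodes W le = {u\<in>W. \<forall>v\<in>W. le u v \<longrightarrow> v = u}"

definition H1 :: "'a set \<Rightarrow> ('a \<Rightarrow> 'a \<Rightarrow> bool) \<Rightarrow> 'a set" where
  "H1 W le = {u\<in>W. height W le u = 1}"

definition HH :: "'a set \<Rightarrow> ('a \<Rightarrow> 'a \<Rightarrow> bool) \<Rightarrow> 'a set" where
  "HH W le = minimal_nodes W le \<union>
     {u\<in>H1 W le. \<exists>a b. a \<in> minimal_nodes W le \<and> b \<in> minimal_nodes W le \<and> a \<noteq> b \<and> le a u \<and> le b u}"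

definition HH_star :: "'a set \<Rightarrow> ('a \<Rightarrow> 'a \<Rightarrow> bool) \<Rightarrow> 'a \<Rightarrow> 'a set" where
  "HH_star W le n = HH W le - {n}"

definition Lambda :: "'a set \<Rightarrow> ('a \<Rightarrow> 'a \<Rightarrow> bool) \<Rightarrow> 'a \<Rightarrow> 'a set" where
  "Lambda W le n = (H1 W le \<inter> HH_star W le n) \<union>
     {v\<in>HH_star W le n. upset W le v \<inter> H1 W le \<inter> HH_star W le n = {}}"

definition ecard :: "'a set \<Rightarrow> enat" where
  "ecard A = (if finite A then enat (card A) else \<infinity>)"

definition dW :: "'a set \<Rightarrow> ('a \<Rightarrow> 'a \<Rightarrow> bool) \<Rightarrow> 'a \<Rightarrow> enat" where
  "dW W le n = ecard (Lambda W le n)"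

definition splitting ::
  "'a set \<Rightarrow> ('a \<Rightarrow> 'a \<Rightarrow> bool) \<Rightarrow> 'b set \<Rightarrow> ('b \<Rightarrow> 'b \<Rightarrow> bool) \<Rightarrow> 'b \<Rightarrow> ('a \<Rightarrow> 'b) \<Rightarrow> bool" where
  "splitting U leU V leV m phi \<longleftrightarrow>
     phi ` U = V \<and>
     (\<forall>x\<in>U. \<forall>y\<in>U. leU x y \<longrightarrow> leV (phi x) (phi y)) \<and>
     (\<exists>M. finite M \<and> M \<noteq> {} \<and> M \<subseteq> maximal_nodes U leU \<and> (\<forall>x\<in>M. height U leU x > 0) \<and>
          {x\<in>U. phi x = m} = M) \<and>
     (\<forall>v\<in>V. v \<noteq> m \<longrightarrow> card {x\<in>U. phi x = v} = 1) \<and>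
     (\<forall>x'\<in>U. \<forall>y\<in>V. leV (phi x') y \<longrightarrow> (\<exists>y'\<in>U. leU x' y' \<and> phi y' = y))"

end

theory Submission
  imports Defs
begin

text \<open>Away from the split node the splitting map is injective, and it reflects the order:
  a comparability \<open>\<phi> x \<le> \<phi> y\<close> lifts to some \<open>x \<le> y'\<close> with \<open>\<phi> y' = \<phi> y\<close>, and \<open>y' = y\<close> by uniqueness
  of preimages. Nodes below \<open>n\<close> avoid the fibre \<open>\<M>\<close>, since \<open>\<M>\<close> consists of maximal nodes and
  \<open>n \<notin> \<M>\<close>. So \<open>\<phi>\<close> restricts to an order isomorphism \<open>L\<^sub>U(n) \<cong> L\<^sub>V(\<phi> n)\<close>, and \<open>d\<close> is defined
  purely in terms of the order, hence invariant.\<close>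

definition finite_chains_below :: "'a set \<Rightarrow> ('a \<Rightarrow> 'a \<Rightarrow> bool) \<Rightarrow> 'a \<Rightarrow> 'a set set" where
  "finite_chains_below W le u = {C. finite C \<and> C \<noteq> {} \<and> C \<subseteq> downset W le u \<and> is_chain le C}"

lemma height_eq_Sup_chains:
  "height W le u = Sup ((\<lambda>C. enat (card C - 1)) ` finite_chains_below W le u)"
  unfolding height_def finite_chains_below_def by (simp add: setcompr_eq_image)

lemma Collect_bij_betw_eq_image:
  assumes "bij_betw f A B" and "\<And>x. x \<in> A \<Longrightarrow> Q (f x) \<longleftrightarrow> P x"
  shows "{y\<in>B. Q y} = f ` {x\<in>A. P x}"
  using assms unfolding bij_betw_def by auto

locale order_iso =
  fixes A :: "'a set" and le :: "'a \<Rightarrow> 'a \<Rightarrow> bool"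
    and B :: "'b set" and le' :: "'b \<Rightarrow> 'b \<Rightarrow> bool" and f :: "'a \<Rightarrow> 'b"
  assumes bij: "bij_betw f A B"
    and le_iff: "\<And>x y. x \<in> A \<Longrightarrow> y \<in> A \<Longrightarrow> le' (f x) (f y) \<longleftrightarrow> le x y"
begin

lemma inj: "inj_on f A"
  using bij by (rule bij_betw_imp_inj_on)

lemma image_eq: "f ` A = B"
  using bij by (rule bij_betw_imp_surj_on)

lemma eq_iff: "x \<in> A \<Longrightarrow> y \<in> A \<Longrightarrow> f x = f y \<longleftrightarrow> x = y"
  using inj by (rule inj_on_eq_iff)

lemma downset_image: "u \<in> A \<Longrightarrow> downset B le' (f u) = f ` downset A le u"
  unfolding downset_def by (rule Collect_bij_betw_eq_image[OF bij]) (simp add: le_iff)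

lemma upset_image: "u \<in> A \<Longrightarrow> upset B le' (f u) = f ` upset A le u"
  unfolding upset_def by (rule Collect_bij_betw_eq_image[OF bij]) (simp add: le_iff)

lemma minimal_nodes_image: "minimal_nodes B le' = f ` minimal_nodes A le"
  unfolding minimal_nodes_def
  by (rule Collect_bij_betw_eq_image[OF bij]) (auto simp: image_eq[symmetric] le_iff eq_iff)

lemma image_subset_image_iff: "C \<subseteq> A \<Longrightarrow> D \<subseteq> A \<Longrightarrow> f ` C \<subseteq> f ` D \<longleftrightarrow> C \<subseteq> D"
  using inj unfolding inj_on_def by blast

lemma is_chain_image: "C \<subseteq> A \<Longrightarrow> is_chain le' (f ` C) \<longleftrightarrow> is_chain le C"
  unfolding is_chain_def by (auto simp: le_iff subset_iff)

lemma finite_chains_below_image: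
  assumes u: "u \<in> A"
  shows "finite_chains_below B le' (f u) = image f ` finite_chains_below A le u"
proof -
  have "finite_chains_below B le' (f u) = {D\<in>Pow B. finite D \<and> D \<noteq> {} \<and> D \<subseteq> f ` downset A le u \<and> is_chain le' D}"
    using image_eq unfolding finite_chains_below_def downset_image[OF u] by (auto simp: downset_def)
  also have "\<dots> = image f ` {C\<in>Pow A. finite (f ` C) \<and> f ` C \<noteq> {} \<and> f ` C \<subseteq> f ` downset A le u \<and> is_chain le' (f ` C)}"
    by (rule Collect_bij_betw_eq_image[OF bij_betw_Pow[OF bij]]) (rule refl)
  also have "\<dots> = image f ` finite_chains_below A le u"
  proof (intro arg_cong[where f = "image (image f)"] set_eqI)
    fix C
    have "downset A le u \<subseteq> A" by (auto simp: downset_def)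
    then show "C \<in> {C\<in>Pow A. finite (f ` C) \<and> f ` C \<noteq> {} \<and> f ` C \<subseteq> f ` downset A le u \<and> is_chain le' (f ` C)}
      \<longleftrightarrow> C \<in> finite_chains_below A le u"
      unfolding finite_chains_below_def
      by (auto simp: finite_image_iff[OF inj_on_subset[OF inj]] image_subset_image_iff is_chain_image)
  qed
  finally show ?thesis .
qed

lemma height_image: "u \<in> A \<Longrightarrow> height B le' (f u) = height A le u"
proof -
  assume u: "u \<in> A"
  have "card (f ` C) = card C" if "C \<in> finite_chains_below A le u" for C
    using that inj_on_subset[OF inj] unfolding finite_chains_below_def downset_def
    by (auto intro: card_image)
  then show ?thesis
    unfolding height_eq_Sup_chains finite_chains_below_image[OF u] image_image
    by (intro arg_cong[where f = Sup] image_cong) simp_all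
qed

lemma H1_image: "H1 B le' = f ` H1 A le"
  unfolding H1_def by (rule Collect_bij_betw_eq_image[OF bij]) (simp add: height_image)

lemma Collect_image_eq_image:
  "S \<subseteq> A \<Longrightarrow> (\<And>x. x \<in> S \<Longrightarrow> Q (f x) \<longleftrightarrow> P x) \<Longrightarrow> {y\<in>f ` S. Q y} = f ` {x\<in>S. P x}"
  by (rule Collect_bij_betw_eq_image[OF inj_on_imp_bij_betw[OF inj_on_subset[OF inj]]])

lemma HH_image: "HH B le' = f ` HH A le"
proof -
  have min_A: "minimal_nodes A le \<subseteq> A" and H1_A: "H1 A le \<subseteq> A"
    unfolding minimal_nodes_def H1_def by auto
  show ?thesis
    unfolding HH_def minimal_nodes_image H1_image image_Un
    using H1_A min_A by (subst Collect_image_eq_image) (auto simp: le_iff eq_iff subset_iff)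
qed

lemma HH_star_image: "n \<in> A \<Longrightarrow> HH_star B le' (f n) = f ` HH_star A le n"
  unfolding HH_star_def HH_image
  using inj_on_image_set_diff[OF inj, of "HH A le" "{n}"] by (auto simp: HH_def minimal_nodes_def H1_def)

lemma Lambda_image:
  assumes n: "n \<in> A"
  shows "Lambda B le' (f n) = f ` Lambda A le n"
proof -
  have H1_A: "H1 A le \<subseteq> A" and HH_star_A: "HH_star A le n \<subseteq> A"
    by (auto simp: H1_def HH_star_def HH_def minimal_nodes_def)
  have upset_A: "upset A le v \<subseteq> A" for v
    by (auto simp: upset_def)
  show ?thesis
    unfolding Lambda_def H1_image HH_star_image[OF n] image_Un
      inj_on_image_Int[OF inj H1_A HH_star_A, symmetric]
    using HH_star_A H1_A upset_A
    by (subst Collect_image_eq_image) (auto simp: upset_image eq_iff subset_iff)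
qed

lemma dW_image: "n \<in> A \<Longrightarrow> dW B le' (f n) = dW A le n"
proof -
  assume n: "n \<in> A"
  have "inj_on f (Lambda A le n)"
    by (rule inj_on_subset[OF inj]) (auto simp: Lambda_def HH_star_def HH_def minimal_nodes_def H1_def)
  then show ?thesis
    unfolding dW_def ecard_def Lambda_image[OF n] by (simp add: finite_image_iff card_image)
qed

end

lemma splitting_image: "splitting U leU V leV m phi \<Longrightarrow> phi ` U = V"
  unfolding splitting_def by blast

lemma splitting_mono:
  "splitting U leU V leV m phi \<Longrightarrow> x \<in> U \<Longrightarrow> y \<in> U \<Longrightarrow> leU x y \<Longrightarrow> leV (phi x) (phi y)"
  unfolding splitting_def by blast

lemma splitting_fibre_maximal:
  "splitting U leU V leV m phi \<Longrightarrow> x \<in> U \<Longrightarrow> phi x = m \<Longrightarrow> x \<in> maximal_nodes U leU"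
  unfolding splitting_def by blast

lemma splitting_inj_off_split_node:
  assumes sp: "splitting U leU V leV m phi"
    and "x \<in> U" "y \<in> U" "phi x = phi y" "phi x \<noteq> m"
  shows "x = y"
proof -
  have "card {z\<in>U. phi z = phi x} = 1"
    using sp assms(2,5) unfolding splitting_def by blast
  then obtain a where "{z\<in>U. phi z = phi x} = {a}"
    by (rule card_1_singletonE)
  moreover have "x \<in> {z\<in>U. phi z = phi x}" "y \<in> {z\<in>U. phi z = phi x}"
    using assms(2-4) by auto
  ultimately show ?thesis
    by (metis singletonD)
qed

lemma splitting_reflects_le:
  assumes sp: "splitting U leU V leV m phi"
    and x: "x \<in> U" and y: "y \<in> U" and "phi y \<noteq> m" and le: "leV (phi x) (phi y)"
  shows "leU x y"
proof -
  have "phi y \<in> V"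
    using splitting_image[OF sp] y by blast
  then obtain y' where y': "y' \<in> U" "leU x y'" "phi y' = phi y"
    using sp x le unfolding splitting_def by blast
  have "y' = y"
    using splitting_inj_off_split_node[OF sp y'(1) y y'(3)] y'(3) \<open>phi y \<noteq> m\<close> by simp
  then show ?thesis
    using y'(2) by simp
qed

lemma splitting_downset_order_iso:
  assumes sp: "splitting U leU V leV m phi" and n: "n \<in> U" "phi n \<noteq> m"
  shows "order_iso (downset U leU n) leU (downset V leV (phi n)) leV phi"
proof
  have off_m: "phi x \<noteq> m" if "x \<in> downset U leU n" for x
    using that n splitting_fibre_maximal[OF sp] unfolding downset_def maximal_nodes_def by blast
  show "bij_betw phi (downset U leU n) (downset V leV (phi n))"
    unfolding bij_betw_def
  proof
    show "inj_on phi (downset U leU n)"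
      using off_m splitting_inj_off_split_node[OF sp]
      unfolding inj_on_def downset_def by blast
    show "phi ` downset U leU n = downset V leV (phi n)"
      using n splitting_image[OF sp] splitting_mono[OF sp] splitting_reflects_le[OF sp]
      unfolding downset_def by auto
  qed
  show "leV (phi x) (phi y) \<longleftrightarrow> leU x y"
    if "x \<in> downset U leU n" "y \<in> downset U leU n" for x y
    using that off_m splitting_mono[OF sp] splitting_reflects_le[OF sp]
    unfolding downset_def by blast
qed

theorem lemma5p5:
  fixes U :: "'a set" and leU :: "'a \<Rightarrow> 'a \<Rightarrow> bool"
    and V :: "'b set" and leV :: "'b \<Rightarrow> 'b \<Rightarrow> bool"
    and m :: 'b and phi :: "'a \<Rightarrow> 'b" and n :: 'a
  assumes "poset U leU" and "poset V leV"
    and "m \<in> maximal_nodes V leV" and "height V leV m > 0"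
    and "splitting U leU V leV m phi"
    and "n \<in> U" and "phi n \<noteq> m" and "height U leU n > 0"
  shows "dW (downset U leU n) leU n = dW (downset V leV (phi n)) leV (phi n)"
proof -
  have "n \<in> downset U leU n"
    using assms(1,6) unfolding poset_def downset_def by blast
  then show ?thesis
    using order_iso.dW_image[OF splitting_downset_order_iso[OF assms(5-7)]] by simp
qed

end
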